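(* Let $k\in\{2,3\}$ and let $D$ be an $m$-colored semicomplete bipartite digraph such that every subdigraph of $D$ isomorphic to $\overrightarrow{C}_4\upuparrows\overrightarrow{C}_4$ is at most $k$-colored. Let $x,y$ be distinct vertices of $D$. If there exists a directed path from $x$ to $y$ using exactly $k$ colors and there is no directed path from $y$ to $x$ using at most $k$ colors, then $d(x,y)\leq 2$.
   Context: A semicomplete bipartite digraph is a digraph whose vertex set is partitioned into two nonempty independent sets such that for any two vertices $u,v$ in different parts at least one of the arcs $(u,v)$, $(v,u)$ is present (both may be present). An $m$-colored digraph is a digraph whose arcs are each assigned one of $m$ colors. A directed path (no repeated vertices) is $j$-colored if its arcs use exactly $j$ distinct colors; it uses at most $k$ colors if it is $j$-colored for some $1\le j\le k$. A subdigraph is at most $k$-colored if its arcs use at most $k$ colors. $\overrightarrow{C}_4\upuparrows\overrightarrow{C}_4$ denotes the digraph on five distinct vertices $a,b,c,d,e$ with arcs $a\to b$, $b\to c$, $c\to d$, $d\to a$, $c\to e$, $e\to a$, i.e. two directed $4$-cycles $(a,b,c,d,a)$ and $(a,b,c,e,a)$ sharing the directed path $a\to b\to c$. $d(x,y)$ denotes the minimum number of arcs of a directed path from $x$ to $y$. *)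

theory Defs
  imports Main
begin

text \<open>A digraph is given by a vertex set V and an arc set A \<subseteq> V \<times> V (loopless).
  An m-coloured digraph additionally has a colouring col of arcs with colours in {1..m}.\<close>

definition semicomplete_bipartite :: "'a set \<Rightarrow> ('a \<times> 'a) set \<Rightarrow> bool" where
  "semicomplete_bipartite V A \<longleftrightarrow>
     A \<subseteq> V \<times> V \<and>
     (\<exists>X Y. X \<noteq> {} \<and> Y \<noteq> {} \<and> X \<inter> Y = {} \<and> X \<union> Y = V \<and>
        (\<forall>u\<in>X. \<forall>v\<in>X. (u, v) \<notin> A) \<and>
        (\<forall>u\<in>Y. \<forall>v\<in>Y. (u, v) \<notin> A) \<and>
        (\<forall>u\<in>X. \<forall>v\<in>Y. (u, v) \<in> A \<or> (v, u) \<in> A))"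

definition dpath :: "('a \<times> 'a) set \<Rightarrow> 'a list \<Rightarrow> bool" where
  "dpath A p \<longleftrightarrow> length p \<ge> 2 \<and> distinct p \<and>
     (\<forall>i. Suc i < length p \<longrightarrow> (p ! i, p ! Suc i) \<in> A)"

definition dpath_from_to :: "('a \<times> 'a) set \<Rightarrow> 'a list \<Rightarrow> 'a \<Rightarrow> 'a \<Rightarrow> bool" where
  "dpath_from_to A p x y \<longleftrightarrow> dpath A p \<and> hd p = x \<and> last p = y"

definition path_colors :: "('a \<times> 'a \<Rightarrow> 'c) \<Rightarrow> 'a list \<Rightarrow> 'c set" where
  "path_colors col p = {col (p ! i, p ! Suc i) | i. Suc i < length p}"

definition ddist :: "('a \<times> 'a) set \<Rightarrow> 'a \<Rightarrow> 'a \<Rightarrow> nat" where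
  "ddist A x y = (LEAST n. \<exists>p. dpath_from_to A p x y \<and> length p = Suc n)"

text \<open>Every subdigraph isomorphic to C4 upuparrows C4 (five distinct vertices a,b,c,d,e,
  arcs a->b, b->c, c->d, d->a, c->e, e->a) uses at most k colours.\<close>
definition C4C4_at_most_colored :: "('a \<times> 'a) set \<Rightarrow> ('a \<times> 'a \<Rightarrow> 'c) \<Rightarrow> nat \<Rightarrow> bool" where
  "C4C4_at_most_colored A col k \<longleftrightarrow>
     (\<forall>a b c d e. distinct [a, b, c, d, e] \<and>
        (a, b) \<in> A \<and> (b, c) \<in> A \<and> (c, d) \<in> A \<and> (d, a) \<in> A \<and> (c, e) \<in> A \<and> (e, a) \<in> A
        \<longrightarrow> card (col ` {(a, b), (b, c), (c, d), (d, a), (c, e), (e, a)}) \<le> k)"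

end

theory Submission
  imports Defs
begin

(* Split V into the independent sides X and Y.
   - If x and y lie on different sides, semicompleteness gives an arc between them;
     the arc y -> x would be a 1-coloured path back, so x -> y is an arc and d(x,y) = 1.
   - If x and y lie on the same side X and there is no 2-path x -> z -> y, we derive a
     contradiction.  No 2-path y -> z -> x exists either (it would use at most 2 colours).
     Hence every z in Y adjacent from x receives an arc from y, and every other z in Y
     sends arcs to both x and y.  Take the last vertex a = p!i of the given x-y path p
     that lies in Y and is an out-neighbour of x; its successors b = p!(i+1) in X and
     c = p!(i+2) in Y exist, and x,a,b,c,y span a copy of C4 upuparrows C4
     (cycles x a b c x and y a b c y).  By hypothesis it uses at most k colours, so the
     path y a b c x returns from y to x with at most k colours -- a contradiction. *)

lemma path_colors_Cons_Cons [simp]: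
  "path_colors col (a # b # r) = insert (col (a, b)) (path_colors col (b # r))"
proof -
  have "c \<in> path_colors col (a # b # r) \<longleftrightarrow> c \<in> insert (col (a, b)) (path_colors col (b # r))" for c
  proof -
    have "c \<in> path_colors col (a # b # r) \<longleftrightarrow>
        (\<exists>i<Suc (length r). c = col ((a # b # r) ! i, (a # b # r) ! Suc i))"
      unfolding path_colors_def by auto
    also have "\<dots> \<longleftrightarrow> c = col (a, b) \<or> (\<exists>j<length r. c = col ((b # r) ! j, (b # r) ! Suc j))"
      by (simp add: Ex_less_Suc2)
    also have "\<dots> \<longleftrightarrow> c \<in> insert (col (a, b)) (path_colors col (b # r))"
      unfolding path_colors_def by auto
    finally show ?thesis .
  qed
  then show ?thesis by blast
qed

lemma path_colors_single [simp]: "path_colors col [a] = {}"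
  unfolding path_colors_def by simp

lemma dpath_from_to_nth:
  assumes "dpath_from_to A p x y"
  shows "distinct p" "length p \<ge> 2" "p ! 0 = x" "p ! (length p - 1) = y"
    and "\<And>i. Suc i < length p \<Longrightarrow> (p ! i, p ! Suc i) \<in> A"
proof -
  have "p \<noteq> []" using assms by (auto simp: dpath_from_to_def dpath_def)
  then show "distinct p" "length p \<ge> 2" "p ! 0 = x" "p ! (length p - 1) = y"
      "\<And>i. Suc i < length p \<Longrightarrow> (p ! i, p ! Suc i) \<in> A"
    using assms by (auto simp: dpath_from_to_def dpath_def hd_conv_nth last_conv_nth)
qed

lemma dpath_from_to_arc:
  "(u, v) \<in> A \<Longrightarrow> u \<noteq> v \<Longrightarrow> dpath_from_to A [u, v] u v"
  by (auto simp: dpath_from_to_def dpath_def less_Suc_eq)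

lemma dpath_from_to_2arcs:
  "(u, w) \<in> A \<Longrightarrow> (w, v) \<in> A \<Longrightarrow> distinct [u, w, v] \<Longrightarrow> dpath_from_to A [u, w, v] u v"
  by (auto simp: dpath_from_to_def dpath_def less_Suc_eq)

lemma dpath_from_to_4arcs:
  "(u, a) \<in> A \<Longrightarrow> (a, b) \<in> A \<Longrightarrow> (b, c) \<in> A \<Longrightarrow> (c, v) \<in> A \<Longrightarrow> distinct [u, a, b, c, v]
   \<Longrightarrow> dpath_from_to A [u, a, b, c, v] u v"
  by (auto simp: dpath_from_to_def dpath_def less_Suc_eq)

lemma ddist_le_path_length:
  assumes "dpath_from_to A p x y"
  shows "ddist A x y \<le> length p - 1"
proof -
  have "length p = Suc (length p - 1)"
    using dpath_from_to_nth(2)[OF assms] by simp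
  then have "\<exists>q. dpath_from_to A q x y \<and> length q = Suc (length p - 1)"
    using assms by blast
  then show ?thesis unfolding ddist_def by (rule Least_le)
qed

lemma ddist_le_arc: "(x, y) \<in> A \<Longrightarrow> x \<noteq> y \<Longrightarrow> ddist A x y \<le> 1"
  using ddist_le_path_length[OF dpath_from_to_arc, of x y A] by simp

lemma ddist_le_2arcs:
  "(x, z) \<in> A \<Longrightarrow> (z, y) \<in> A \<Longrightarrow> distinct [x, z, y] \<Longrightarrow> ddist A x y \<le> 2"
  using ddist_le_path_length[OF dpath_from_to_2arcs, of x z A y] by simp

definition bipartition :: "'a set \<Rightarrow> ('a \<times> 'a) set \<Rightarrow> 'a set \<Rightarrow> 'a set \<Rightarrow> bool" where
  "bipartition V A X Y \<longleftrightarrow> A \<subseteq> V \<times> V \<and> X \<inter> Y = {} \<and> X \<union> Y = V \<and>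
     (\<forall>u\<in>X. \<forall>v\<in>X. (u, v) \<notin> A) \<and> (\<forall>u\<in>Y. \<forall>v\<in>Y. (u, v) \<notin> A) \<and>
     (\<forall>u\<in>X. \<forall>v\<in>Y. (u, v) \<in> A \<or> (v, u) \<in> A)"

lemma semicomplete_bipartite_obtain:
  assumes "semicomplete_bipartite V A"
  obtains X Y where "bipartition V A X Y"
  using assms unfolding semicomplete_bipartite_def bipartition_def by blast

text \<open>The two sides play symmetric roles, so arguments need only treat side X.\<close>

lemma bipartition_swap: "bipartition V A X Y \<Longrightarrow> bipartition V A Y X"
  unfolding bipartition_def by blast

lemma bipartition_no_arc_inside:
  "bipartition V A X Y \<Longrightarrow> u \<in> X \<Longrightarrow> (u, v) \<in> A \<Longrightarrow> v \<in> Y"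
  "bipartition V A X Y \<Longrightarrow> v \<in> X \<Longrightarrow> (u, v) \<in> A \<Longrightarrow> u \<in> Y"
  unfolding bipartition_def by blast+

lemma bipartition_loopless: "bipartition V A X Y \<Longrightarrow> (u, u) \<notin> A"
  unfolding bipartition_def by blast

lemma bipartition_sides: "bipartition V A X Y \<Longrightarrow> X \<union> Y = V"
  unfolding bipartition_def by blast

lemma bipartition_disjoint: "bipartition V A X Y \<Longrightarrow> u \<in> X \<Longrightarrow> v \<in> Y \<Longrightarrow> u \<noteq> v"
  unfolding bipartition_def by blast

lemma bipartition_complete:
  "bipartition V A X Y \<Longrightarrow> u \<in> X \<Longrightarrow> v \<in> Y \<Longrightarrow> (u, v) \<in> A \<or> (v, u) \<in> A"
  unfolding bipartition_def by blast

lemma ddist_le_two_path: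
  assumes "bipartition V A X Y" "(x, z) \<in> A" "(z, y) \<in> A" "x \<noteq> y"
  shows "ddist A x y \<le> 2"
proof -
  have "z \<noteq> x" "z \<noteq> y" using assms(2,3) bipartition_loopless[OF assms(1)] by blast+
  then show ?thesis using ddist_le_2arcs[OF assms(2,3)] assms(4) by simp
qed

lemma same_side_configuration:
  assumes bip: "bipartition V A X Y"
    and xX: "x \<in> X" and yX: "y \<in> X" and xy: "x \<noteq> y"
    and P: "dpath_from_to A p x y"
    and no_xy: "\<And>z. (x, z) \<in> A \<Longrightarrow> (z, y) \<notin> A"
    and no_yx: "\<And>z. (y, z) \<in> A \<Longrightarrow> (z, x) \<notin> A"
  obtains a b c where "distinct [a, b, c, x, y]"
    and "(a, b) \<in> A" "(b, c) \<in> A" "(c, x) \<in> A" "(x, a) \<in> A" "(c, y) \<in> A" "(y, a) \<in> A"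
proof -
  note pd = dpath_from_to_nth[OF P]
  have out_x: "(y, z) \<in> A" if "z \<in> Y" "(x, z) \<in> A" for z
    using that no_xy bipartition_complete[OF bip yX] by blast
  have not_out_x: "(z, x) \<in> A \<and> (z, y) \<in> A" if "z \<in> Y" "(x, z) \<notin> A" for z
    using that no_yx bipartition_complete[OF bip] xX yX by blast
  define S where "S = {j. j < length p \<and> (x, p ! j) \<in> A}"
  have "1 \<in> S" using pd(2,3) pd(5)[of 0] unfolding S_def by auto
  define i where "i = Max S"
  have "i \<in> S" unfolding i_def using \<open>1 \<in> S\<close> by (intro Max_in) (auto simp: S_def)
  then have il: "i < length p" and xa: "(x, p ! i) \<in> A" by (auto simp: S_def)
  have imax: "j \<le> i" if "j \<in> S" for j
    unfolding i_def using that by (intro Max_ge) (auto simp: S_def)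
  have aY: "p ! i \<in> Y" using bipartition_no_arc_inside(1)[OF bip xX xa] .
  have ya: "(y, p ! i) \<in> A" using out_x[OF aY xa] .
  have "p ! i \<noteq> y" using bipartition_disjoint[OF bip yX aY] by blast
  then have "i \<noteq> length p - 1" using pd(4) by blast
  then have i1: "Suc i < length p" using il by linarith
  have ab: "(p ! i, p ! Suc i) \<in> A" using pd(5)[OF i1] .
  have bX: "p ! Suc i \<in> X" using bipartition_no_arc_inside(1)[OF bipartition_swap[OF bip] aY ab] .
  have "p ! Suc i \<noteq> y" using ab no_xy xa by blast
  then have "Suc i \<noteq> length p - 1" using pd(4) by auto
  then have i2: "Suc (Suc i) < length p" using i1 by linarith
  have bc: "(p ! Suc i, p ! Suc (Suc i)) \<in> A" using pd(5)[OF i2] .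
  have cY: "p ! Suc (Suc i) \<in> Y" using bipartition_no_arc_inside(1)[OF bip bX bc] .
  have "Suc (Suc i) \<notin> S" using imax by fastforce
  then have "(x, p ! Suc (Suc i)) \<notin> A" using i2 by (auto simp: S_def)
  then have cx: "(p ! Suc (Suc i), x) \<in> A" and cy: "(p ! Suc (Suc i), y) \<in> A"
    using not_out_x[OF cY] by auto
  have "distinct [p ! i, p ! Suc i, p ! Suc (Suc i)]"
    using pd(1) i2 by (auto simp: nth_eq_iff_index_eq)
  moreover have "p ! Suc i \<noteq> x"
    using pd(3) nth_eq_iff_index_eq[OF pd(1) i1 order.strict_trans[OF zero_less_Suc i1]] by simp
  moreover have "p ! i \<noteq> x" "p ! i \<noteq> y" "p ! Suc (Suc i) \<noteq> x" "p ! Suc (Suc i) \<noteq> y"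
    using bipartition_disjoint[OF bip] aY cY xX yX by blast+
  ultimately have "distinct [p ! i, p ! Suc i, p ! Suc (Suc i), x, y]"
    using \<open>p ! Suc i \<noteq> y\<close> xy by simp
  then show thesis using that ab bc cx xa cy ya by blast
qed

lemma two_arc_path_colors: "card (path_colors col [u, w, v]) \<le> 2"
  by (simp add: card_insert_le_m1)

lemma configuration_return_colors:
  assumes "C4C4_at_most_colored A col k" "distinct [a, b, c, x, y]"
    and "(a, b) \<in> A" "(b, c) \<in> A" "(c, x) \<in> A" "(x, a) \<in> A" "(c, y) \<in> A" "(y, a) \<in> A"
  shows "card (path_colors col [y, a, b, c, x]) \<le> k"
proof -
  let ?E = "{(a, b), (b, c), (c, x), (x, a), (c, y), (y, a)}"
  have "path_colors col [y, a, b, c, x] \<subseteq> col ` ?E" by simp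
  then have "card (path_colors col [y, a, b, c, x]) \<le> card (col ` ?E)"
    by (intro card_mono) auto
  also have "\<dots> \<le> k" using assms unfolding C4C4_at_most_colored_def by blast
  finally show ?thesis .
qed

definition no_cheap_return :: "('a \<times> 'a) set \<Rightarrow> ('a \<times> 'a \<Rightarrow> 'c) \<Rightarrow> nat \<Rightarrow> 'a \<Rightarrow> 'a \<Rightarrow> bool" where
  "no_cheap_return A col k y x \<longleftrightarrow>
     (\<forall>q. card (path_colors col q) \<le> k \<longrightarrow> \<not> dpath_from_to A q y x)"

text \<open>Same side: a 2-path from x to y must exist, for otherwise the forced
  configuration yields a return path y a b c x with at most k colours.\<close>

lemma same_side_two_path:
  assumes bip: "bipartition V A X Y" and xX: "x \<in> X" and yX: "y \<in> X" and xy: "x \<noteq> y"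
    and P: "dpath_from_to A p x y"
    and C4: "C4C4_at_most_colored A col k" and k2: "2 \<le> k"
    and ret: "no_cheap_return A col k y x"
  shows "\<exists>z. (x, z) \<in> A \<and> (z, y) \<in> A"
proof (rule ccontr)
  assume "\<nexists>z. (x, z) \<in> A \<and> (z, y) \<in> A"
  then have no_xy: "(z, y) \<notin> A" if "(x, z) \<in> A" for z
    using that by blast
  have no_yx: "(z, x) \<notin> A" if yz: "(y, z) \<in> A" for z
  proof
    assume zx: "(z, x) \<in> A"
    have "z \<in> Y" using bipartition_no_arc_inside(1)[OF bip yX yz] .
    then have "z \<noteq> x" "z \<noteq> y" using bipartition_disjoint[OF bip] xX yX by blast+
    then have "dpath_from_to A [y, z, x] y x"
      using dpath_from_to_2arcs[OF yz zx] xy by simp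
    moreover have "card (path_colors col [y, z, x]) \<le> k"
      using le_trans[OF two_arc_path_colors k2] .
    ultimately show False using ret unfolding no_cheap_return_def by blast
  qed
  obtain a b c where dist: "distinct [a, b, c, x, y]" and arcs:
    "(a, b) \<in> A" "(b, c) \<in> A" "(c, x) \<in> A" "(x, a) \<in> A" "(c, y) \<in> A" "(y, a) \<in> A"
    using same_side_configuration[OF bip xX yX xy P no_xy no_yx] by blast
  have "dpath_from_to A [y, a, b, c, x] y x"
    using dist arcs by (intro dpath_from_to_4arcs) auto
  then show False
    using ret configuration_return_colors[OF C4 dist arcs] unfolding no_cheap_return_def by blast
qed

text \<open>Different sides: the arc y -> x would be a 1-coloured return path,
  so semicompleteness forces the arc x -> y.\<close>

lemma different_sides_arc:
  assumes bip: "bipartition V A X Y" and "x \<in> X" "y \<in> Y"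
    and k1: "1 \<le> k" and ret: "no_cheap_return A col k y x"
  shows "(x, y) \<in> A"
proof -
  have "x \<noteq> y" using bipartition_disjoint[OF bip] assms(2,3) by blast
  have "(x, y) \<in> A \<or> (y, x) \<in> A" using bipartition_complete[OF bip] assms(2,3) by blast
  moreover have "card (path_colors col [y, x]) \<le> k" using k1 by simp
  then have "\<not> dpath_from_to A [y, x] y x" using ret unfolding no_cheap_return_def by blast
  ultimately show ?thesis using dpath_from_to_arc[of y x A] \<open>x \<noteq> y\<close> by blast
qed

lemma ddist_le_2_from_side:
  assumes bip: "bipartition V A X Y" and xX: "x \<in> X" and y: "y \<in> X \<union> Y" and xy: "x \<noteq> y"
    and P: "dpath_from_to A p x y"
    and C4: "C4C4_at_most_colored A col k" and k2: "2 \<le> k"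
    and ret: "no_cheap_return A col k y x"
  shows "ddist A x y \<le> 2"
proof (cases "y \<in> X")
  case True
  then obtain z where "(x, z) \<in> A" "(z, y) \<in> A"
    using same_side_two_path[OF bip xX _ xy P C4 k2 ret] by blast
  then show ?thesis using ddist_le_two_path[OF bip] xy by blast
next
  case False
  then have "(x, y) \<in> A" using different_sides_arc[OF bip xX _ _ ret] y k2 by simp
  then show ?thesis using ddist_le_arc[OF _ xy] by fastforce
qed

theorem mainTheorem5:
  fixes V :: "'a set" and A :: "('a \<times> 'a) set" and col :: "'a \<times> 'a \<Rightarrow> nat"
    and m k :: nat and x y :: 'a
  assumes "finite V"
    and "semicomplete_bipartite V A"
    and "col ` A \<subseteq> {1..m}"
    and "k \<in> {2, 3}"
    and "C4C4_at_most_colored A col k"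
    and "x \<in> V" and "y \<in> V" and "x \<noteq> y"
    and "\<exists>p. dpath_from_to A p x y \<and> card (path_colors col p) = k"
    and "\<not> (\<exists>q. dpath_from_to A q y x \<and> card (path_colors col q) \<le> k)"
  shows "ddist A x y \<le> 2"
proof -
  obtain X Y where bip: "bipartition V A X Y" using assms(2) semicomplete_bipartite_obtain by blast
  obtain p where P: "dpath_from_to A p x y" using assms(9) by blast
  have k2: "2 \<le> k" using assms(4) by auto
  have ret: "no_cheap_return A col k y x" using assms(10) unfolding no_cheap_return_def by blast
  have sides: "x \<in> X \<union> Y" "y \<in> X \<union> Y" "y \<in> Y \<union> X" using bipartition_sides[OF bip] assms(6,7) by blast+
  then consider "x \<in> X" | "x \<in> Y" by blast
  then show ?thesis
  proof cases
    case 1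
    with ddist_le_2_from_side[OF bip _ sides(2) assms(8) P assms(5) k2 ret] show ?thesis .
  next
    case 2
    with ddist_le_2_from_side[OF bipartition_swap[OF bip] _ sides(3) assms(8) P assms(5) k2 ret]
    show ?thesis .
  qed
qed

end
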